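(* Let $(\Omega,\mathcal{F},\mathbb{P})$ be a nonatomic probability space, let $a>0$, $c\ge0$, $C=\frac1a(1+ac-\sqrt{1+a^2c^2})$, and let $u(x)=C$ for $x\ge c$ and $u(x)=\frac1a(1+ax-\sqrt{1+a^2x^2})$ for $x<c$. Let $\alpha<C$ and set $\mathcal{A}_u^\infty=\{X\in L^\infty:\mathbb{E}[u(X)]\ge\alpha\}$. Let $S=(S_0,S_T)$ be a traded asset with $S_T\in L^\infty$ and assume $\rho_{\mathcal{A}_u^\infty,S}$ is finite-valued on $L^\infty$. Then $\mathrm{Index}_{\mathrm{fin}}(\rho_{\mathcal{A}_u^\infty,S})=1$ and the infimum defining the index is attained.
   Context: A traded asset is $S=(S_0,S_T)$ with $S_0>0$, $S_T\ge0$ a.s., $S_T\ne0$. For $\mathcal{B}\subset L^\infty$, $\rho_{\mathcal{B},S}(X)=\inf\{m\in\mathbb{R}:X+\frac{m}{S_0}S_T\in\mathcal{B}\}$. For a convex, law-invariant acceptance set $\mathcal{A}\subset L^\infty$ with $\rho_{\mathcal{A},S}$ finite-valued on $L^\infty$, $\mathrm{Index}_{\mathrm{fin}}(\rho_{\mathcal{A},S})=\inf\{p\in[1,\infty):\text{the closure of }\mathcal{A}\text{ in }L^p\text{ has nonempty interior in }L^p\}$, with $\inf\emptyset=\infty$; the index is attained if this infimum belongs to the set. *)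

theory Defs
  imports "HOL-Probability.Probability"
begin

text \<open>Random variables are real-valued functions on the sample space; L^p spaces are
  represented by their (measurable) representatives, with the L^p seminorm.\<close>

definition nonatomic :: "'a measure \<Rightarrow> bool" where
  "nonatomic M \<longleftrightarrow> (\<forall>A\<in>sets M. measure M A > 0 \<longrightarrow>
      (\<exists>B\<in>sets M. B \<subseteq> A \<and> 0 < measure M B \<and> measure M B < measure M A))"

definition Linf :: "'a measure \<Rightarrow> ('a \<Rightarrow> real) set" where
  "Linf M = {X. X \<in> borel_measurable M \<and> (\<exists>B. AE \<omega> in M. \<bar>X \<omega>\<bar> \<le> B)}"

definition Lp :: "'a measure \<Rightarrow> real \<Rightarrow> ('a \<Rightarrow> real) set" where
  "Lp M p = {X. X \<in> borel_measurable M \<and> integrable M (\<lambda>\<omega>. \<bar>X \<omega>\<bar> powr p)}"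

definition Lp_norm :: "'a measure \<Rightarrow> real \<Rightarrow> ('a \<Rightarrow> real) \<Rightarrow> real" where
  "Lp_norm M p X = (integral\<^sup>L M (\<lambda>\<omega>. \<bar>X \<omega>\<bar> powr p)) powr (1 / p)"

definition Lp_closure :: "'a measure \<Rightarrow> real \<Rightarrow> ('a \<Rightarrow> real) set \<Rightarrow> ('a \<Rightarrow> real) set" where
  "Lp_closure M p A = {X \<in> Lp M p. \<forall>\<epsilon>>0. \<exists>Y\<in>A. Lp_norm M p (\<lambda>\<omega>. X \<omega> - Y \<omega>) < \<epsilon>}"

definition Lp_interior_nonempty :: "'a measure \<Rightarrow> real \<Rightarrow> ('a \<Rightarrow> real) set \<Rightarrow> bool" where
  "Lp_interior_nonempty M p B \<longleftrightarrow> (\<exists>X\<in>Lp M p. \<exists>\<epsilon>>0.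
      \<forall>Y\<in>Lp M p. Lp_norm M p (\<lambda>\<omega>. Y \<omega> - X \<omega>) < \<epsilon> \<longrightarrow> Y \<in> B)"

definition index_set :: "'a measure \<Rightarrow> ('a \<Rightarrow> real) set \<Rightarrow> real set" where
  "index_set M A = {p. 1 \<le> p \<and> Lp_interior_nonempty M p (Lp_closure M p A)}"

text \<open>Index_fin; the infimum of the empty set is \<infinity> in ereal.\<close>
definition Index_fin :: "'a measure \<Rightarrow> ('a \<Rightarrow> real) set \<Rightarrow> ereal" where
  "Index_fin M A = Inf (ereal ` index_set M A)"

definition index_attained :: "'a measure \<Rightarrow> ('a \<Rightarrow> real) set \<Rightarrow> bool" where
  "index_attained M A \<longleftrightarrow> Index_fin M A \<in> ereal ` index_set M A"

definition traded_asset :: "'a measure \<Rightarrow> real \<Rightarrow> ('a \<Rightarrow> real) \<Rightarrow> bool" where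
  "traded_asset M S0 ST \<longleftrightarrow> S0 > 0 \<and> ST \<in> borel_measurable M \<and>
      (AE \<omega> in M. ST \<omega> \<ge> 0) \<and> \<not> (AE \<omega> in M. ST \<omega> = 0)"

definition rho :: "('a \<Rightarrow> real) set \<Rightarrow> real \<Rightarrow> ('a \<Rightarrow> real) \<Rightarrow> ('a \<Rightarrow> real) \<Rightarrow> ereal" where
  "rho B S0 ST X = Inf {ereal m | m. (\<lambda>\<omega>. X \<omega> + (m / S0) * ST \<omega>) \<in> B}"

definition finite_valued_on_Linf :: "'a measure \<Rightarrow> (('a \<Rightarrow> real) \<Rightarrow> ereal) \<Rightarrow> bool" where
  "finite_valued_on_Linf M r \<longleftrightarrow> (\<forall>X\<in>Linf M. \<bar>r X\<bar> \<noteq> \<infinity>)"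

definition uC :: "real \<Rightarrow> real \<Rightarrow> real" where
  "uC a c = (1 + a * c - sqrt (1 + a\<^sup>2 * c\<^sup>2)) / a"

definition u :: "real \<Rightarrow> real \<Rightarrow> real \<Rightarrow> real" where
  "u a c x = (if x \<ge> c then uC a c else (1 + a * x - sqrt (1 + a\<^sup>2 * x\<^sup>2)) / a)"

definition A_u_inf :: "'a measure \<Rightarrow> real \<Rightarrow> real \<Rightarrow> real \<Rightarrow> ('a \<Rightarrow> real) set" where
  "A_u_inf M a c \<alpha> = {X \<in> Linf M. integral\<^sup>L M (\<lambda>\<omega>. u a c (X \<omega>)) \<ge> \<alpha>}"

end

theory Submission
  imports Defs
begin

text \<open>Below the cap, \<open>u\<close> is \<open>x \<mapsto> (1 + a x - \<surd>(1 + a\<^sup>2x\<^sup>2))/a\<close>, whose slope lies in \<open>[0, 2]\<close>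
  because \<open>\<surd>(1 + x\<^sup>2)\<close> is 1-Lipschitz. Hence \<open>u \<le> C\<close> and \<open>u(x) \<ge> C - 2|x - c|\<close>, so
  \<open>E[u(X)] \<ge> C - 2 E|X - c|\<close> for bounded \<open>X\<close>: every bounded \<open>X\<close> in the \<open>L\<^sup>1\<close>-ball of radius
  \<open>(C - \<alpha>)/2\<close> around the constant \<open>c\<close> is acceptable. Truncations of an integrable \<open>X\<close> in that ball
  stay in it and converge in \<open>L\<^sup>1\<close>, so the \<open>L\<^sup>1\<close>-closure of the acceptance set contains the whole
  ball; thus \<open>1\<close> belongs to the index set, and it is its least possible element.\<close>

lemma sqrt_one_plus_square_lipschitz:
  fixes s t :: real
  shows "\<bar>sqrt (1 + s\<^sup>2) - sqrt (1 + t\<^sup>2)\<bar> \<le> \<bar>s - t\<bar>"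
proof -
  have "\<bar>norm (1::real, s) - norm (1::real, t)\<bar> \<le> norm ((1::real, s) - (1, t))"
    by (rule norm_triangle_ineq3)
  then show ?thesis by (simp add: norm_Pair)
qed

lemma u_below_cap:
  assumes "a > 0" "x < c"
  shows "u a c x = (1 + a * x - sqrt (1 + (a * x)\<^sup>2)) / a"
    and "uC a c = (1 + a * c - sqrt (1 + (a * c)\<^sup>2)) / a"
  using assms by (simp_all add: u_def uC_def power_mult_distrib)

lemma u_le_uC:
  assumes "a > 0"
  shows "u a c x \<le> uC a c"
proof (cases "x < c")
  case True
  have "a * x < a * c" using assms True by simp
  then have "sqrt (1 + (a * c)\<^sup>2) - sqrt (1 + (a * x)\<^sup>2) \<le> a * c - a * x"
    using sqrt_one_plus_square_lipschitz[of "a * c" "a * x"] by linarith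
  then show ?thesis
    using assms True by (simp add: u_below_cap divide_right_mono)
qed (simp add: u_def)

lemma uC_minus_u_le:
  assumes "a > 0"
  shows "uC a c - u a c x \<le> 2 * \<bar>x - c\<bar>"
proof (cases "x < c")
  case True
  have "sqrt (1 + (a * x)\<^sup>2) - sqrt (1 + (a * c)\<^sup>2) \<le> a * c - a * x"
    using sqrt_one_plus_square_lipschitz[of "a * x" "a * c"] assms True by simp
  then have "(1 + a * c - sqrt (1 + (a * c)\<^sup>2)) - (1 + a * x - sqrt (1 + (a * x)\<^sup>2))
      \<le> a * (2 * \<bar>x - c\<bar>)"
    using True by (simp add: algebra_simps)
  then show ?thesis
    using assms True by (simp add: u_below_cap diff_divide_distrib[symmetric] pos_divide_le_eq mult.commute)
qed (simp add: u_def)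

lemma abs_u_le:
  assumes "a > 0"
  shows "\<bar>u a c x\<bar> \<le> 2 * \<bar>uC a c\<bar> + 2 * \<bar>x - c\<bar>"
  using u_le_uC[OF assms, of c x] uC_minus_u_le[OF assms, of c x] by linarith

lemma u_measurable [measurable]: "u a c \<in> borel_measurable borel"
  unfolding u_def by measurable

lemma expectation_u_ge:
  assumes "prob_space M" "a > 0" "X \<in> Linf M"
  shows "integrable M (\<lambda>\<omega>. u a c (X \<omega>))"
    and "uC a c - 2 * (\<integral>\<omega>. \<bar>X \<omega> - c\<bar> \<partial>M) \<le> (\<integral>\<omega>. u a c (X \<omega>) \<partial>M)"
proof -
  interpret prob_space M by fact
  obtain B where [measurable]: "X \<in> borel_measurable M"
    and bound: "AE \<omega> in M. \<bar>X \<omega>\<bar> \<le> B"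
    using assms(3) unfolding Linf_def by auto
  have dist_int: "integrable M (\<lambda>\<omega>. \<bar>X \<omega> - c\<bar>)"
    by (rule integrable_const_bound[where B = "B + \<bar>c\<bar>"]) (use bound in auto)
  show u_int: "integrable M (\<lambda>\<omega>. u a c (X \<omega>))"
  proof (rule integrable_const_bound[where B = "2 * \<bar>uC a c\<bar> + 2 * (B + \<bar>c\<bar>)"])
    show "AE \<omega> in M. norm (u a c (X \<omega>)) \<le> 2 * \<bar>uC a c\<bar> + 2 * (B + \<bar>c\<bar>)"
      using bound
    proof eventually_elim
      case (elim \<omega>)
      then have "\<bar>X \<omega> - c\<bar> \<le> B + \<bar>c\<bar>" by linarith
      then show ?case using abs_u_le[OF assms(2), of c "X \<omega>"] by simp
    qed
  qed simp
  have "uC a c - 2 * (\<integral>\<omega>. \<bar>X \<omega> - c\<bar> \<partial>M) = (\<integral>\<omega>. uC a c - 2 * \<bar>X \<omega> - c\<bar> \<partial>M)"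
    using dist_int by (simp add: prob_space)
  also have "\<dots> \<le> (\<integral>\<omega>. u a c (X \<omega>) \<partial>M)"
    using uC_minus_u_le[OF assms(2)] u_int dist_int
    by (intro integral_mono) (auto simp: algebra_simps)
  finally show "uC a c - 2 * (\<integral>\<omega>. \<bar>X \<omega> - c\<bar> \<partial>M) \<le> (\<integral>\<omega>. u a c (X \<omega>) \<partial>M)" .
qed

definition truncation :: "real \<Rightarrow> real \<Rightarrow> real" where
  "truncation n y = max (- n) (min n y)"

lemma truncation_tendsto_L1:
  assumes "integrable M X"
  shows "(\<lambda>n. \<integral>\<omega>. \<bar>X \<omega> - truncation (real n) (X \<omega>)\<bar> \<partial>M) \<longlonglongrightarrow> 0"
proof -
  have [measurable]: "X \<in> borel_measurable M" using assms by auto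
  have "(\<lambda>n. \<integral>\<omega>. \<bar>X \<omega> - truncation (real n) (X \<omega>)\<bar> \<partial>M) \<longlonglongrightarrow> (\<integral>\<omega>. 0 \<partial>M)"
  proof (rule integral_dominated_convergence[where w = "\<lambda>\<omega>. \<bar>X \<omega>\<bar>"])
    show "AE \<omega> in M. (\<lambda>n. \<bar>X \<omega> - truncation (real n) (X \<omega>)\<bar>) \<longlonglongrightarrow> 0"
    proof (rule AE_I2)
      fix \<omega>
      obtain N :: nat where "\<bar>X \<omega>\<bar> \<le> real N" using real_arch_simple by blast
      then have "\<forall>n\<ge>N. \<bar>X \<omega> - truncation (real n) (X \<omega>)\<bar> = 0"
        by (auto simp: truncation_def)
      then show "(\<lambda>n. \<bar>X \<omega> - truncation (real n) (X \<omega>)\<bar>) \<longlonglongrightarrow> 0"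
        by (intro tendsto_eventually) (auto simp: eventually_sequentially)
    qed
  qed (use assms in \<open>auto simp: truncation_def\<close>)
  then show ?thesis by simp
qed

lemma Lp_one: "Lp M 1 = {X. integrable M X}"
  unfolding Lp_def by (auto simp: integrable_abs_iff)

lemma Lp_norm_one: "Lp_norm M 1 X = (\<integral>\<omega>. \<bar>X \<omega>\<bar> \<partial>M)"
  unfolding Lp_norm_def by (simp add: integral_nonneg_AE)

lemma L1_ball_subset_closure_A_u_inf:
  assumes "prob_space M" "a > 0" "integrable M X"
    and "(\<integral>\<omega>. \<bar>X \<omega> - c\<bar> \<partial>M) \<le> (uC a c - \<alpha>) / 2"
  shows "X \<in> Lp_closure M 1 (A_u_inf M a c \<alpha>)"
  unfolding Lp_closure_def
proof (intro CollectI conjI allI impI)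
  interpret prob_space M by fact
  have [measurable]: "X \<in> borel_measurable M" using assms(3) by auto
  show "X \<in> Lp M 1" using assms(3) by (simp add: Lp_one)
  fix \<epsilon> :: real assume "\<epsilon> > 0"
  then obtain N where N: "\<And>n. n \<ge> N \<Longrightarrow> (\<integral>\<omega>. \<bar>X \<omega> - truncation (real n) (X \<omega>)\<bar> \<partial>M) < \<epsilon>"
    using truncation_tendsto_L1[OF assms(3)] unfolding LIMSEQ_def by (auto simp: dist_real_def)
  obtain n :: nat where "n \<ge> N" "\<bar>c\<bar> \<le> real n"
    using real_arch_simple[of "\<bar>c\<bar>"] by (metis le_cases nat_le_real_less of_nat_le_iff order.trans)
  define Z where "Z = (\<lambda>\<omega>. truncation (real n) (X \<omega>))"
  have [measurable]: "Z \<in> borel_measurable M"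
    unfolding Z_def truncation_def by measurable
  have Z_bound: "\<bar>Z \<omega>\<bar> \<le> real n" for \<omega> unfolding Z_def truncation_def by auto
  then have Z_Linf: "Z \<in> Linf M" unfolding Linf_def by auto
  have "integrable M (\<lambda>\<omega>. \<bar>Z \<omega> - c\<bar>)"
    by (rule integrable_const_bound[where B = "real n + \<bar>c\<bar>"])
       (use Z_bound in \<open>auto intro!: AE_I2 abs_triangle_ineq4[THEN order_trans] add_mono\<close>)
  moreover have "\<bar>Z \<omega> - c\<bar> \<le> \<bar>X \<omega> - c\<bar>" for \<omega>
    using \<open>\<bar>c\<bar> \<le> real n\<close> unfolding Z_def truncation_def by auto
  ultimately have "(\<integral>\<omega>. \<bar>Z \<omega> - c\<bar> \<partial>M) \<le> (\<integral>\<omega>. \<bar>X \<omega> - c\<bar> \<partial>M)"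
    using assms(3) by (intro integral_mono) auto
  then have "\<alpha> \<le> (\<integral>\<omega>. u a c (Z \<omega>) \<partial>M)"
    using expectation_u_ge(2)[OF assms(1,2) Z_Linf, of c] assms(4) by argo
  then have "Z \<in> A_u_inf M a c \<alpha>" using Z_Linf unfolding A_u_inf_def by auto
  moreover have "Lp_norm M 1 (\<lambda>\<omega>. X \<omega> - Z \<omega>) < \<epsilon>"
    using N[OF \<open>n \<ge> N\<close>] by (simp add: Lp_norm_one Z_def)
  ultimately show "\<exists>Y\<in>A_u_inf M a c \<alpha>. Lp_norm M 1 (\<lambda>\<omega>. X \<omega> - Y \<omega>) < \<epsilon>" by blast
qed

lemma one_in_index_set_A_u_inf:
  assumes "prob_space M" "a > 0" "\<alpha> < uC a c"
  shows "1 \<in> index_set M (A_u_inf M a c \<alpha>)"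
  unfolding index_set_def Lp_interior_nonempty_def
proof (intro CollectI conjI bexI[of _ "\<lambda>_. c"] exI[of _ "(uC a c - \<alpha>) / 2"] ballI impI)
  interpret prob_space M by fact
  show "(\<lambda>_. c) \<in> Lp M 1" by (simp add: Lp_one)
  show "0 < (uC a c - \<alpha>) / 2" using assms(3) by simp
  fix X assume "X \<in> Lp M 1" "Lp_norm M 1 (\<lambda>\<omega>. X \<omega> - c) < (uC a c - \<alpha>) / 2"
  then show "X \<in> Lp_closure M 1 (A_u_inf M a c \<alpha>)"
    using assms by (intro L1_ball_subset_closure_A_u_inf) (auto simp: Lp_one Lp_norm_one)
qed simp

lemma Index_fin_eq_one:
  assumes "1 \<in> index_set M A"
  shows "Index_fin M A = 1" and "index_attained M A"
proof -
  have one: "1 \<in> ereal ` index_set M A" using assms by (metis image_eqI one_ereal_def)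
  show "Index_fin M A = 1"
    unfolding Index_fin_def
    by (rule Inf_eqI) (use one in \<open>auto simp: index_set_def\<close>)
  then show "index_attained M A" using one by (simp add: index_attained_def)
qed

theorem corollary6p9:
  fixes M :: "'a measure" and a c \<alpha> S0 :: real and ST :: "'a \<Rightarrow> real"
  assumes "prob_space M"
    and "nonatomic M"
    and "a > 0" and "c \<ge> 0"
    and "\<alpha> < uC a c"
    and "traded_asset M S0 ST" and "ST \<in> Linf M"
    and "finite_valued_on_Linf M (rho (A_u_inf M a c \<alpha>) S0 ST)"
  shows "Index_fin M (A_u_inf M a c \<alpha>) = 1 \<and> index_attained M (A_u_inf M a c \<alpha>)"
  \<comment> \<open>Nonatomicity, the asset and the finiteness of \<open>\<rho>\<close> play no role: the index cannot go below 1.\<close>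
  using Index_fin_eq_one[OF one_in_index_set_A_u_inf[OF assms(1,3,5)]] by blast

end
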